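(* Let $k\geq2$ and let $W\subseteq\mathbb{Z}_{3k}$ be such that for every $i\in\mathbb{Z}_{3k}$, $|x^i\cap W|\geq1$ and $|C^i\cap\overline W|\geq2$, where $\overline W=\mathbb{Z}_{3k}\setminus W$. Let $i\in\overline W$ be such that $\overline W\cap[i+2k,i+2k+\omega(i)]_{3k}\neq\emptyset$. Then there exists a cover $\tilde x$ of $C^k_{3k}$ with $|\tilde x|=4$ and $\tilde x\cap W=\emptyset$.
   Context: $\mathbb{Z}_{3k}=\{0,\dots,3k-1\}$ with addition modulo $3k$; $[a,b]_{3k}$ is the cyclic closed interval from $a$ to $b$. $C^i=\{i,\dots,i+k-1\}$ (mod $3k$), $C^k_{3k}$ is the $3k\times3k$ $0,1$ matrix whose $i$-th row is the incidence vector of $C^i$, and a cover is a subset $x\subseteq\mathbb{Z}_{3k}$ meeting every $C^i$. $x^i=\{i,i+k,i+2k\}$. For $i\in\overline W$, $\omega(i)=\min\{t\geq0: i+k+t\in\overline W\}$ (well defined since $|C^{i+k}\cap\overline W|\ge2$). *)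

theory Defs
  imports Main
begin

text \<open>Z_{3k} is modelled as {0..<3*k} :: nat set with arithmetic mod 3*k.\<close>

definition Zn :: "nat \<Rightarrow> nat set" where
  "Zn k = {0..<3*k}"

definition Cset :: "nat \<Rightarrow> nat \<Rightarrow> nat set" where
  "Cset k i = {(i + j) mod (3*k) | j. j < k}"

definition xset :: "nat \<Rightarrow> nat \<Rightarrow> nat set" where
  "xset k i = {i mod (3*k), (i + k) mod (3*k), (i + 2*k) mod (3*k)}"

text \<open>cyclic closed interval [a,b]_n: a, a+1, ..., b (mod n)\<close>
definition cinterval :: "nat \<Rightarrow> nat \<Rightarrow> nat \<Rightarrow> nat set" where
  "cinterval n a b = {(a + t) mod n | t. t \<le> (b mod n + n - a mod n) mod n}"

definition is_cover :: "nat \<Rightarrow> nat set \<Rightarrow> bool" where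
  "is_cover k x \<longleftrightarrow> x \<subseteq> Zn k \<and> (\<forall>i \<in> Zn k. x \<inter> Cset k i \<noteq> {})"

definition omega :: "nat \<Rightarrow> nat set \<Rightarrow> nat \<Rightarrow> nat" where
  "omega k Wc i = (LEAST t. (i + k + t) mod (3*k) \<in> Wc)"

end

theory Submission
  imports Defs "HOL-Number_Theory.Cong"
begin

text \<open>Write \<open>\<omega> = \<omega>(i)\<close>. The window starting at \<open>i + \<omega>\<close> contains a point \<open>i + \<omega> + j\<close> outside
  \<open>W\<close>, and \<open>\<omega> + j < k\<close> because \<open>i + k, \<dots>, i + k + \<omega> - 1\<close> all lie in \<open>W\<close>. The hypothesis
  supplies a point \<open>i + 2k + s\<close> outside \<open>W\<close> with \<open>s \<le> \<omega>\<close>, and \<open>\<omega> \<ge> 1\<close> since otherwise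
  \<open>x\<^sup>i\<close> would miss \<open>W\<close>. The four points \<open>i, i + \<omega> + j, i + k + \<omega>, i + 2k + s\<close> avoid \<open>W\<close> and
  are cyclically spaced at most \<open>k\<close> apart, so they meet every window of length \<open>k\<close>.\<close>

lemma shift_mod_inj_on: "inj_on (\<lambda>d. (i + d) mod n) {..<n::nat}"
proof (rule inj_onI)
  fix d1 d2 assume "d1 \<in> {..<n}" "d2 \<in> {..<n}" "(i + d1) mod n = (i + d2) mod n"
  then show "d1 = d2"
    by (metis cong_add_lcancel_nat cong_def cong_less_modulus_unique_nat lessThan_iff)
qed

lemma cinterval_from_offset:
  assumes "l \<in> cinterval n a (a + w)" and "w < n"
  obtains s where "s \<le> w" and "l = (a + s) mod n"
proof -
  let ?X = "(a + w) mod n + n - a mod n"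
  have "a mod n + ?X = (a + w) mod n + n"
    using mod_less_divisor[of n a] \<open>w < n\<close> by linarith
  then have "[a mod n + ?X = a mod n + w] (mod n)"
    by (simp add: cong_def mod_add_left_eq)
  then have "?X mod n = w"
    using \<open>w < n\<close> by (metis cong_add_lcancel_nat cong_def mod_less)
  with assms that show thesis
    unfolding cinterval_def by auto
qed

lemma Cset_mod: "Cset k (m mod (3*k)) = Cset k m"
  unfolding Cset_def by (simp add: mod_add_left_eq)

lemma shift_mem_Cset: "j < k \<Longrightarrow> (m + j) mod (3*k) \<in> Cset k m"
  unfolding Cset_def by blast

lemma is_cover_shift_image:
  assumes "0 < k" and gaps: "\<forall>e < 3*k. \<exists>d \<in> D. e \<le> d \<and> d < e + k"
  shows "is_cover k ((\<lambda>d. (i + d) mod (3*k)) ` D)"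
  unfolding is_cover_def
proof (intro conjI ballI)
  show "(\<lambda>d. (i + d) mod (3*k)) ` D \<subseteq> Zn k"
    using \<open>0 < k\<close> by (auto simp: Zn_def)
next
  fix m assume "m \<in> Zn k"
  then have m: "m < 3*k" by (simp add: Zn_def)
  define e where "e = (m + 3*k - i mod (3*k)) mod (3*k)"
  have "e < 3*k" using \<open>0 < k\<close> by (simp add: e_def)
  then obtain d where "d \<in> D" "e \<le> d" "d < e + k" using gaps by blast
  have "(i + e) mod (3*k) = m"
  proof -
    have "(i + e) mod (3*k) = (i mod (3*k) + (m + 3*k - i mod (3*k))) mod (3*k)"
      unfolding e_def by (metis mod_add_eq mod_mod_trivial)
    also have "i mod (3*k) + (m + 3*k - i mod (3*k)) = m + 3*k"
      using mod_less_divisor[of "3*k" i] \<open>0 < k\<close> by linarith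
    finally show ?thesis using m by simp
  qed
  then have "(i + d) mod (3*k) = (m + (d - e)) mod (3*k)"
    using \<open>e \<le> d\<close> by (metis add.assoc le_add_diff_inverse mod_add_left_eq)
  moreover have "d - e < k" using \<open>e \<le> d\<close> \<open>d < e + k\<close> by linarith
  then have "(m + (d - e)) mod (3*k) \<in> Cset k m" by (rule shift_mem_Cset)
  ultimately show "(\<lambda>d. (i + d) mod (3*k)) ` D \<inter> Cset k m \<noteq> {}"
    using \<open>d \<in> D\<close> by (metis IntI empty_iff image_eqI)
qed

lemma four_offsets_cover:
  assumes "0 < a" "a < b" "b < c" "c < 3*k"
    and "a \<le> k" "b \<le> a + k" "c \<le> b + k" "3*k \<le> c + k"
  shows "is_cover k ((\<lambda>d. (i + d) mod (3*k)) ` {0, a, b, c})"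
    and "card ((\<lambda>d. (i + d) mod (3*k)) ` {0, a, b, c}) = 4"
proof -
  have "\<forall>e < 3*k. \<exists>d \<in> {0, 3*k, a, b, c}. e \<le> d \<and> d < e + k"
    using assms by auto
  then have "is_cover k ((\<lambda>d. (i + d) mod (3*k)) ` {0, 3*k, a, b, c})"
    using assms by (intro is_cover_shift_image) auto
  then show "is_cover k ((\<lambda>d. (i + d) mod (3*k)) ` {0, a, b, c})"
    by simp
  have "inj_on (\<lambda>d. (i + d) mod (3*k)) {0, a, b, c}"
    using shift_mod_inj_on by (rule inj_on_subset) (use assms in auto)
  then show "card ((\<lambda>d. (i + d) mod (3*k)) ` {0, a, b, c}) = 4"
    using assms by (simp add: card_image)
qed

lemma window_meets_complement:
  assumes "\<forall>j \<in> Zn k. card (Cset k j \<inter> (Zn k - W)) \<ge> 2" and "0 < k"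
  obtains j where "j < k" and "(m + j) mod (3*k) \<in> Zn k - W"
proof -
  have "m mod (3*k) \<in> Zn k" using \<open>0 < k\<close> by (simp add: Zn_def)
  with assms have "card (Cset k m \<inter> (Zn k - W)) \<ge> 2" by (metis Cset_mod)
  then obtain y where "y \<in> Cset k m \<inter> (Zn k - W)"
    by (metis card.empty equals0I not_numeral_le_zero)
  with that show thesis unfolding Cset_def by blast
qed

context
  fixes k :: nat and Wc :: "nat set" and i j :: nat
  assumes witness: "j < k" "(i + k + j) mod (3*k) \<in> Wc"
begin

lemma omega_less: "omega k Wc i < k"
  unfolding omega_def using witness by (meson Least_le le_less_trans)

lemma omega_mem: "(i + k + omega k Wc i) mod (3*k) \<in> Wc"
  unfolding omega_def using witness(2) by (rule LeastI)

end

lemma omega_minimal: "t < omega k Wc i \<Longrightarrow> (i + k + t) mod (3*k) \<notin> Wc"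
  unfolding omega_def by (rule not_less_Least)

text \<open>The window starting at \<open>i + \<omega>(i)\<close> ends inside the gap \<open>[i+k, i+k+\<omega>(i))\<close> of \<open>W\<close>, so
  each of its points outside \<open>W\<close> lies before \<open>i + k\<close>.\<close>

lemma complement_offset_before_k:
  assumes "j < k" and "(i + omega k Wc i + j) mod (3*k) \<in> Wc" and "omega k Wc i \<le> k"
  shows "omega k Wc i + j < k"
proof (rule ccontr)
  assume "\<not> ?thesis"
  then have "i + omega k Wc i + j = i + k + (omega k Wc i + j - k)"
    and "omega k Wc i + j - k < omega k Wc i"
    using assms by linarith+
  with assms(2) omega_minimal show False by metis
qed

theorem mainTheorem8:
  fixes k :: nat and W :: "nat set" and i :: nat
  assumes "k \<ge> 2"
    and "W \<subseteq> Zn k"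
    and "\<forall>j \<in> Zn k. card (xset k j \<inter> W) \<ge> 1"
    and "\<forall>j \<in> Zn k. card (Cset k j \<inter> (Zn k - W)) \<ge> 2"
    and "i \<in> Zn k - W"
    and "(Zn k - W) \<inter> cinterval (3*k) (i + 2*k) (i + 2*k + omega k (Zn k - W) i) \<noteq> {}"
  shows "\<exists>x. is_cover k x \<and> card x = 4 \<and> x \<inter> W = {}"
proof -
  let ?Wc = "Zn k - W" and ?\<omega> = "omega k (Zn k - W) i"
  have "0 < k" using assms(1) by simp
  obtain j where "j < k" "(i + k + j) mod (3*k) \<in> ?Wc"
    using window_meets_complement[OF assms(4) \<open>0 < k\<close>] by (metis add.assoc)
  then have \<omega>_less: "?\<omega> < k" and \<omega>_mem: "(i + k + ?\<omega>) mod (3*k) \<in> ?Wc"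
    by (rule omega_less, rule omega_mem)
  obtain l where "l \<in> ?Wc" "l \<in> cinterval (3*k) (i + 2*k) (i + 2*k + ?\<omega>)"
    using assms(6) by blast
  moreover have "?\<omega> < 3*k" using \<omega>_less by linarith
  ultimately obtain s where "s \<le> ?\<omega>" and s_mem: "(i + 2*k + s) mod (3*k) \<in> ?Wc"
    by (metis cinterval_from_offset)
  have i_mem: "i mod (3*k) \<in> ?Wc" using assms(5) by (simp add: Zn_def)
  have "0 < ?\<omega>"
  proof (rule ccontr)
    assume "\<not> 0 < ?\<omega>"
    then have "xset k i \<inter> W = {}"
      using i_mem \<omega>_mem s_mem \<open>s \<le> ?\<omega>\<close> by (auto simp: xset_def)
    then show False using assms(3,5) by fastforce
  qed
  obtain j' where "j' < k" and j'_mem: "(i + ?\<omega> + j') mod (3*k) \<in> ?Wc"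
    using window_meets_complement[OF assms(4) \<open>0 < k\<close>] by blast
  then have "?\<omega> + j' < k"
    using \<omega>_less by (intro complement_offset_before_k) auto
  let ?x = "(\<lambda>d. (i + d) mod (3*k)) ` {0, ?\<omega> + j', k + ?\<omega>, 2*k + s}"
  have "is_cover k ?x" and "card ?x = 4"
    by (rule four_offsets_cover; use \<open>0 < ?\<omega>\<close> \<open>?\<omega> + j' < k\<close> \<omega>_less \<open>s \<le> ?\<omega>\<close> in linarith)+
  moreover have "?x \<subseteq> ?Wc"
    using i_mem j'_mem \<omega>_mem s_mem by (simp add: ac_simps)
  ultimately show ?thesis by blast
qed

end
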